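(* In the setting described in the context, let $\alpha>1$, $\beta>1$, $k\in\{2,\ldots,K\}$, and $j_*\in\mathbb N\cap[(2^\beta+1)^{1/\beta},\infty)$. Assume that for some $\zeta>0$ and some $\lambda\in(\sqrt{1/\alpha},1)$, $$\sqrt{\alpha\log A_{j_*}}\left(\frac{\Delta_k(1-\lambda)}{\sqrt{\zeta\alpha\log A_{2j_*}}}-\frac{2\sqrt2}{j_*^{\beta/2}}\right)\ge\Delta_k.$$ Then for any $i\in\{1,\ldots,n\}$, $$\mathbb P\left(T_k^{(i)}(A_{2j_*})<\frac{\zeta\alpha\log A_{2j_*}}{\Delta_k^2},\ \mathcal E_{j_*}^{(i)}\right)\le\frac{2\zeta\alpha\beta\log(j_* )\,j_*^{2\beta(1-\alpha\lambda^2)}}{\Delta_k^2(\alpha\lambda^2-1)}+\left(1-\frac1{nK}\right)^{j_*},$$ where $\mathcal E_{j_*}^{(i)}=\{T_1^{(i)}(A_{j_*})>j_*^\beta/2\}\cap\bigcap_{j=j_*}^{2j_*}\bigcup_{t=1+A_{j-1}}^{A_j}\{I_t^{(i)}=1\}$.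
   Context: Bandit: $K$ arms $1,\ldots,K$; arm $k$ yields Bernoulli$(\mu_k)$ rewards with $\mu_k\in(0,1)$, independent across agents and across pulls; $\mu_1>\mu_2\ge\cdots\ge\mu_K$, and $\Delta_k=\mu_1-\mu_k$. There are $n$ honest agents $1,\ldots,n$ and exactly one malicious agent $n+1$. All random variables live on a common probability space $(\Omega,\mathcal F,\mathbb P)$. For honest agent $i$, $I_t^{(i)}$ is the arm pulled at time $t\in\mathbb N$, $T_k^{(i)}(t)$ the number of pulls of arm $k$ by $i$ during times $1,\ldots,t$, and $\hat\mu_k^{(i)}(t)$ the average reward of those pulls. Algorithm (run by each honest agent $i$) with inputs $\alpha$, $\beta$ and a sticky set $\hat S^{(i)}\subset\{1,\ldots,K\}$ of size $S$: set $A_0=0$, $A_j=\lceil j^\beta\rceil$; phase $j$ consists of times $A_{j-1}+1,\ldots,A_j$. The initial active set is $S_1^{(i)}=\hat S^{(i)}\cup\{U_1^{(i)},L_1^{(i)}\}$ with $U_1^{(i)},L_1^{(i)}$ distinct arms not in $\hat S^{(i)}$. At each time $t$ in phase $j$, $i$ pulls $I_t^{(i)}\in\arg\max_{k\in S_j^{(i)}}\hat\mu_k^{(i)}(t-1)+\sqrt{\alpha\log(t)/T_k^{(i)}(t-1)}$. At $t=A_j$: $B_j^{(i)}\in\arg\max_{k\in S_j^{(i)}}T_k^{(i)}(A_j)-T_k^{(i)}(A_{j-1})$; there is no blocking, so an agent $H_j^{(i)}$ is drawn uniformly at random from $\{1,\ldots,n+1\}\setminus\{i\}$; if $H_j^{(i)}\le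 n$ the recommendation is $R_j^{(i)}=B_j^{(H_j^{(i)})}$, otherwise $R_j^{(i)}$ is uniformly random on $\{1,\ldots,K\}$ (independently of everything else). If $R_j^{(i)}\in S_j^{(i)}$ then $S_{j+1}^{(i)}=S_j^{(i)}$; otherwise $U_{j+1}^{(i)}\in\arg\max_{k\in\{U_j^{(i)},L_j^{(i)}\}}T_k^{(i)}(A_j)-T_k^{(i)}(A_{j-1})$, $L_{j+1}^{(i)}=R_j^{(i)}$, and $S_{j+1}^{(i)}=\hat S^{(i)}\cup\{U_{j+1}^{(i)},L_{j+1}^{(i)}\}$. *)

theory Defs
  imports "HOL-Probability.Probability"
begin

definition phase_end :: "real \<Rightarrow> nat \<Rightarrow> nat" where
  "phase_end \<beta> j = (if j = 0 then 0 else nat \<lceil>real j powr \<beta>\<rceil>)"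

definition pulls :: "(nat \<Rightarrow> nat \<Rightarrow> 'a \<Rightarrow> nat) \<Rightarrow> nat \<Rightarrow> nat \<Rightarrow> nat \<Rightarrow> 'a \<Rightarrow> nat" where
  "pulls I i k t \<omega> = card {s \<in> {1..t}. I i s \<omega> = k}"

(* Reward model ("reward stack"): Y i k m is the reward agent i receives on its m-th pull
   of arm k.  hat mu_k^{(i)}(t) is the average of the first T_k^{(i)}(t) entries. *)
definition emp_mean ::
  "(nat \<Rightarrow> nat \<Rightarrow> nat \<Rightarrow> 'a \<Rightarrow> nat) \<Rightarrow> (nat \<Rightarrow> nat \<Rightarrow> 'a \<Rightarrow> nat) \<Rightarrow> nat \<Rightarrow> nat \<Rightarrow> nat \<Rightarrow> 'a \<Rightarrow> real" where
  "emp_mean Y I i k t \<omega> =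
     (if pulls I i k t \<omega> = 0 then 0
      else (\<Sum>m = 1..pulls I i k t \<omega>. real (Y i k m \<omega>)) / real (pulls I i k t \<omega>))"

definition ucb ::
  "real \<Rightarrow> (nat \<Rightarrow> nat \<Rightarrow> nat \<Rightarrow> 'a \<Rightarrow> nat) \<Rightarrow> (nat \<Rightarrow> nat \<Rightarrow> 'a \<Rightarrow> nat) \<Rightarrow> nat \<Rightarrow> nat \<Rightarrow> nat \<Rightarrow> 'a \<Rightarrow> ereal" where
  "ucb \<alpha> Y I i k t \<omega> =
     (if pulls I i k (t - 1) \<omega> = 0 then \<infinity>
      else ereal (emp_mean Y I i k (t - 1) \<omega> + sqrt (\<alpha> * ln (real t) / real (pulls I i k (t - 1) \<omega>))))"

definition phase_pulls :: "real \<Rightarrow> (nat \<Rightarrow> nat \<Rightarrow> 'a \<Rightarrow> nat) \<Rightarrow> nat \<Rightarrow> nat \<Rightarrow> nat \<Rightarrow> 'a \<Rightarrow> nat" where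
  "phase_pulls \<beta> I i k j \<omega> = pulls I i k (phase_end \<beta> j) \<omega> - pulls I i k (phase_end \<beta> (j - 1)) \<omega>"

definition active :: "(nat \<Rightarrow> nat set) \<Rightarrow> (nat \<Rightarrow> nat \<Rightarrow> 'a \<Rightarrow> nat) \<Rightarrow> (nat \<Rightarrow> nat \<Rightarrow> 'a \<Rightarrow> nat) \<Rightarrow> nat \<Rightarrow> nat \<Rightarrow> 'a \<Rightarrow> nat set" where
  "active Shat U L i j \<omega> = Shat i \<union> {U i j \<omega>, L i j \<omega>}"

(* recommendation R_j^{(i)}: from honest agent H_j^{(i)} if H \<le> n, otherwise the uniformly random arm Z *)
definition recomm :: "nat \<Rightarrow> (nat \<Rightarrow> nat \<Rightarrow> 'a \<Rightarrow> nat) \<Rightarrow> (nat \<Rightarrow> nat \<Rightarrow> 'a \<Rightarrow> nat) \<Rightarrow> (nat \<Rightarrow> nat \<Rightarrow> 'a \<Rightarrow> nat) \<Rightarrow> nat \<Rightarrow> nat \<Rightarrow> 'a \<Rightarrow> nat" where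
  "recomm n H Z B i j \<omega> = (if H i j \<omega> \<le> n then B (H i j \<omega>) j \<omega> else Z i j \<omega>)"

definition prim :: "(nat \<Rightarrow> nat \<Rightarrow> nat \<Rightarrow> 'a \<Rightarrow> nat) \<Rightarrow> (nat \<Rightarrow> nat \<Rightarrow> 'a \<Rightarrow> nat) \<Rightarrow> (nat \<Rightarrow> nat \<Rightarrow> 'a \<Rightarrow> nat)
     \<Rightarrow> (nat \<times> nat \<times> nat) + ((nat \<times> nat) + (nat \<times> nat)) \<Rightarrow> 'a \<Rightarrow> nat" where
  "prim Y H Z x = (case x of Inl (i, k, m) \<Rightarrow> Y i k m
                            | Inr (Inl (i, j)) \<Rightarrow> H i j
                            | Inr (Inr (i, j)) \<Rightarrow> Z i j)"

definition prim_index :: "nat \<Rightarrow> nat \<Rightarrow> ((nat \<times> nat \<times> nat) + ((nat \<times> nat) + (nat \<times> nat))) set" where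
  "prim_index n K =
     Inl ` {(i, k, m). i \<in> {1..n} \<and> k \<in> {1..K} \<and> 1 \<le> m}
   \<union> Inr ` (Inl ` {(i, j). i \<in> {1..n} \<and> 1 \<le> j} \<union> Inr ` {(i, j). i \<in> {1..n} \<and> 1 \<le> j})"

definition primitives_ok ::
  "'a measure \<Rightarrow> nat \<Rightarrow> nat \<Rightarrow> (nat \<Rightarrow> real)
   \<Rightarrow> (nat \<Rightarrow> nat \<Rightarrow> nat \<Rightarrow> 'a \<Rightarrow> nat) \<Rightarrow> (nat \<Rightarrow> nat \<Rightarrow> 'a \<Rightarrow> nat) \<Rightarrow> (nat \<Rightarrow> nat \<Rightarrow> 'a \<Rightarrow> nat) \<Rightarrow> bool" where
  "primitives_ok M n K \<mu> Y H Z \<longleftrightarrow>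
     prob_space M \<and>
     prob_space.indep_vars M (\<lambda>_. count_space UNIV) (prim Y H Z) (prim_index n K) \<and>
     (\<forall>i\<in>{1..n}. \<forall>k\<in>{1..K}. \<forall>m\<ge>1.
         (\<forall>\<omega>\<in>space M. Y i k m \<omega> \<in> {0, 1}) \<and>
         measure M {\<omega> \<in> space M. Y i k m \<omega> = 1} = \<mu> k) \<and>
     (\<forall>i\<in>{1..n}. \<forall>j\<ge>1.
         (\<forall>\<omega>\<in>space M. H i j \<omega> \<in> {1..n+1} - {i}) \<and>
         (\<forall>h\<in>{1..n+1} - {i}. measure M {\<omega> \<in> space M. H i j \<omega> = h} = 1 / real n) \<and>
         (\<forall>\<omega>\<in>space M. Z i j \<omega> \<in> {1..K}) \<and>
         (\<forall>a\<in>{1..K}. measure M {\<omega> \<in> space M. Z i j \<omega> = a} = 1 / real K))"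

(* The honest agents run the algorithm (with arbitrary tie-breaking in every argmax). *)
definition algorithm_run ::
  "'a measure \<Rightarrow> nat \<Rightarrow> nat \<Rightarrow> real \<Rightarrow> real \<Rightarrow> (nat \<Rightarrow> nat set) \<Rightarrow> (nat \<Rightarrow> nat) \<Rightarrow> (nat \<Rightarrow> nat)
   \<Rightarrow> (nat \<Rightarrow> nat \<Rightarrow> nat \<Rightarrow> 'a \<Rightarrow> nat) \<Rightarrow> (nat \<Rightarrow> nat \<Rightarrow> 'a \<Rightarrow> nat) \<Rightarrow> (nat \<Rightarrow> nat \<Rightarrow> 'a \<Rightarrow> nat)
   \<Rightarrow> (nat \<Rightarrow> nat \<Rightarrow> 'a \<Rightarrow> nat) \<Rightarrow> (nat \<Rightarrow> nat \<Rightarrow> 'a \<Rightarrow> nat) \<Rightarrow> (nat \<Rightarrow> nat \<Rightarrow> 'a \<Rightarrow> nat)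
   \<Rightarrow> (nat \<Rightarrow> nat \<Rightarrow> 'a \<Rightarrow> nat) \<Rightarrow> bool" where
  "algorithm_run M n K \<alpha> \<beta> Shat u1 l1 Y H Z I U L B \<longleftrightarrow>
     (\<forall>i\<in>{1..n}. \<forall>t. I i t \<in> measurable M (count_space UNIV)) \<and>
     (\<forall>i\<in>{1..n}. \<forall>\<omega>\<in>space M.
        U i 1 \<omega> = u1 i \<and> L i 1 \<omega> = l1 i \<and>
        (\<forall>j\<ge>1.
           (\<forall>t\<in>{phase_end \<beta> (j - 1) + 1 .. phase_end \<beta> j}.
              I i t \<omega> \<in> active Shat U L i j \<omega> \<and>
              (\<forall>k\<in>active Shat U L i j \<omega>. ucb \<alpha> Y I i k t \<omega> \<le> ucb \<alpha> Y I i (I i t \<omega>) t \<omega>)) \<and>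
           B i j \<omega> \<in> active Shat U L i j \<omega> \<and>
           (\<forall>k\<in>active Shat U L i j \<omega>. phase_pulls \<beta> I i k j \<omega> \<le> phase_pulls \<beta> I i (B i j \<omega>) j \<omega>) \<and>
           (if recomm n H Z B i j \<omega> \<in> active Shat U L i j \<omega>
            then U i (j + 1) \<omega> = U i j \<omega> \<and> L i (j + 1) \<omega> = L i j \<omega>
            else U i (j + 1) \<omega> \<in> {U i j \<omega>, L i j \<omega>} \<and>
                 phase_pulls \<beta> I i (U i j \<omega>) j \<omega> \<le> phase_pulls \<beta> I i (U i (j + 1) \<omega>) j \<omega> \<and>
                 phase_pulls \<beta> I i (L i j \<omega>) j \<omega> \<le> phase_pulls \<beta> I i (U i (j + 1) \<omega>) j \<omega> \<and>
                 L i (j + 1) \<omega> = recomm n H Z B i j \<omega>)))"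

end

theory Submission
  imports Defs
begin

(* Write J for j*.  If the malicious agent recommends arm k to agent i in some phase j of
   [J, 2J), then k is active in phase j + 1, where agent i pulls arm 1 at some time t in
   (A_J, A_2J]; so the UCB index of k at t is at most that of arm 1.  At that time k has been
   pulled s < zeta alpha log A_2J / Delta_k^2 times and arm 1 u > J^beta / 2 times, and the
   separation hypothesis turns the UCB comparison into a deviation of an empirical mean: the
   mean of the first s rewards of k is below mu_k - lambda sqrt (alpha log t / s), or the mean
   of the first u rewards of arm 1 is above mu_1 + sqrt (2 alpha log t / J^beta).  Rewards are
   indexed by pull number, so for fixed (t, s) or (t, u) Hoeffding's inequality bounds these
   events by t^(-2 alpha lambda^2) and t^(-2 alpha); a union bound over t > A_J gives the first
   term.  The malicious agent misses arm k in all J phases with probability (1 - 1/(nK))^J. *)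

lemma pulls_mono: "t \<le> t' \<Longrightarrow> pulls I i c t \<omega> \<le> pulls I i c t' \<omega>"
  unfolding pulls_def by (intro card_mono) auto

lemma pulls_le: "pulls I i c t \<omega> \<le> t"
proof -
  have "pulls I i c t \<omega> \<le> card {1..t}" unfolding pulls_def by (intro card_mono) auto
  then show ?thesis by simp
qed

lemma phase_end_mono:
  assumes "j \<le> j'" "\<beta> > 0"
  shows "phase_end \<beta> j \<le> phase_end \<beta> j'"
proof (cases "j = 0")
  case False
  then have "real j powr \<beta> \<le> real j' powr \<beta>"
    using assms by (intro powr_mono2) auto
  then have "nat \<lceil>real j powr \<beta>\<rceil> \<le> nat \<lceil>real j' powr \<beta>\<rceil>"
    by (intro nat_mono ceiling_mono)
  then show ?thesis
    using False assms by (simp add: phase_end_def)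
qed (simp add: phase_end_def)

lemma phase_end_ge: "j \<noteq> 0 \<Longrightarrow> real j powr \<beta> \<le> real (phase_end \<beta> j)"
  by (simp add: phase_end_def)

lemma phase_end_le: "j \<noteq> 0 \<Longrightarrow> real (phase_end \<beta> j) < real j powr \<beta> + 1"
  by (simp add: phase_end_def) linarith

lemma powr_diff_ge_mult_powr:
  fixes p x :: real
  assumes p: "p > 1" and x: "x \<ge> 1"
  shows "(p - 1) * (x + 1) powr (-p) \<le> x powr (1 - p) - (x + 1) powr (1 - p)"
proof -
  have "((\<lambda>y. y powr (1 - p)) has_real_derivative (1 - p) * y powr (1 - p - 1)) (at y)"
    if "x \<le> y" for y
    using x that by (intro has_real_derivative_powr) auto
  then obtain z where z: "x < z" "z < x + 1"
    and mvt: "(x + 1) powr (1 - p) - x powr (1 - p) = (x + 1 - x) * ((1 - p) * z powr (1 - p - 1))"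
    using MVT2[of x "x + 1" "\<lambda>y. y powr (1 - p)" "\<lambda>y. (1 - p) * y powr (1 - p - 1)"] by auto
  have "(x + 1) powr (-p) \<le> z powr (-p)"
    using z x p by (intro powr_mono2') auto
  then have "(p - 1) * (x + 1) powr (-p) \<le> (p - 1) * z powr (-p)"
    using p by (intro mult_left_mono) auto
  also have "\<dots> = x powr (1 - p) - (x + 1) powr (1 - p)"
    using mvt by (simp add: algebra_simps)
  finally show ?thesis .
qed

lemma sum_powr_neg_le:
  fixes p :: real and a b :: nat
  assumes p: "p > 1" and a: "1 \<le> a"
  shows "(\<Sum>t\<in>{a<..b}. real t powr (-p)) \<le> real a powr (1 - p) / (p - 1)"
proof -
  have "(\<Sum>t\<in>{a<..b}. real t powr (-p)) \<le> (real a powr (1 - p) - real b powr (1 - p)) / (p - 1)"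
    if "a \<le> b" for b
    using that
  proof (induction b rule: dec_induct)
    case base
    then show ?case by simp
  next
    case (step b)
    have "(\<Sum>t\<in>{a<..Suc b}. real t powr (-p)) = real (Suc b) powr (-p) + (\<Sum>t\<in>{a<..b}. real t powr (-p))"
      using step.hyps by (simp add: atLeastSucAtMost_greaterThanAtMost[symmetric] add.commute)
    also have "\<dots> \<le> real (Suc b) powr (-p) + (real a powr (1 - p) - real b powr (1 - p)) / (p - 1)"
      using step.IH by simp
    also have "\<dots> \<le> (real a powr (1 - p) - real (Suc b) powr (1 - p)) / (p - 1)"
    proof -
      have "real (Suc b) powr (-p) \<le> (real b powr (1 - p) - real (Suc b) powr (1 - p)) / (p - 1)"
        using powr_diff_ge_mult_powr[OF p, of "real b"] step.hyps a p
        by (simp add: pos_le_divide_eq mult.commute add.commute)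
      then show ?thesis
        by (simp add: diff_divide_distrib)
    qed
    finally show ?case .
  qed
  moreover have "(real a powr (1 - p) - real b powr (1 - p)) / (p - 1) \<le> real a powr (1 - p) / (p - 1)"
    using p by (intro divide_right_mono) auto
  ultimately show ?thesis
    using p by (cases "a \<le> b") (fastforce, simp)
qed

lemma
  fixes x :: real
  assumes "x \<ge> 0"
  shows finite_positive_below: "finite {s :: nat. 1 \<le> s \<and> real s < x}"
    and card_positive_below: "real (card {s :: nat. 1 \<le> s \<and> real s < x}) \<le> x"
proof -
  have eq: "{s :: nat. 1 \<le> s \<and> real s < x} = {1..<nat \<lceil>x\<rceil>}"
    by (auto simp: zless_nat_eq_int_zless less_ceiling_iff)
  then show "finite {s :: nat. 1 \<le> s \<and> real s < x}"
    by simp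
  have "real (nat \<lceil>x\<rceil> - 1) \<le> x"
    using assms by (cases "nat \<lceil>x\<rceil>") (auto simp: of_nat_diff, linarith+)
  then show "real (card {s :: nat. 1 \<le> s \<and> real s < x}) \<le> x"
    unfolding eq card_atLeastLessThan .
qed

lemma decreasing_from_le:
  fixes \<mu> :: "nat \<Rightarrow> real"
  assumes "\<forall>a\<in>{b..<K}. \<mu> (a + 1) \<le> \<mu> a" and "b \<le> a" "a \<le> K"
  shows "\<mu> a \<le> \<mu> b"
  using assms(2,3)
proof (induction a rule: dec_induct)
  case (step m)
  then have "\<mu> (m + 1) \<le> \<mu> m"
    using assms(1) by simp
  then show ?case
    using step by simp
qed simp

context prob_space
begin

lemma
  fixes X :: "'i \<Rightarrow> 'a \<Rightarrow> nat" and p \<epsilon> :: real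
  assumes indep: "indep_vars (\<lambda>_. count_space UNIV) X J" and J: "finite J" "J \<noteq> {}"
    and binary: "\<And>j \<omega>. j \<in> J \<Longrightarrow> \<omega> \<in> space M \<Longrightarrow> X j \<omega> \<in> {0, 1}"
    and success: "\<And>j. j \<in> J \<Longrightarrow> prob {\<omega> \<in> space M. X j \<omega> = 1} = p"
    and \<epsilon>: "\<epsilon> \<ge> 0"
  shows Hoeffding_Bernoulli_mean_le:
      "prob {\<omega> \<in> space M. (\<Sum>j\<in>J. real (X j \<omega>)) / card J \<le> p - \<epsilon>} \<le> exp (-2 * real (card J) * \<epsilon>\<^sup>2)"
    and Hoeffding_Bernoulli_mean_ge:
      "prob {\<omega> \<in> space M. (\<Sum>j\<in>J. real (X j \<omega>)) / card J \<ge> p + \<epsilon>} \<le> exp (-2 * real (card J) * \<epsilon>\<^sup>2)"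
proof -
  have expectation: "expectation (\<lambda>\<omega>. real (X j \<omega>)) = p" if "j \<in> J" for j
  proof -
    have "random_variable (count_space UNIV) (X j)"
      using indep that by (simp add: indep_vars_def)
    then have "{\<omega> \<in> space M. X j \<omega> = 1} \<in> events"
      by measurable
    moreover have "real (X j \<omega>) = indicator {\<omega> \<in> space M. X j \<omega> = 1} \<omega>" if "\<omega> \<in> space M" for \<omega>
      using binary[OF \<open>j \<in> J\<close> that] that by (auto simp: indicator_def)
    ultimately show ?thesis
      using success[OF that] by (simp cong: Bochner_Integration.integral_cong)
  qed
  interpret Hoeffding_ineq M J "\<lambda>j \<omega>. real (X j \<omega>)" "\<lambda>_. 0" "\<lambda>_. 1" "card J * p"
  proof unfold_locales
    show "indep_vars (\<lambda>_. borel) (\<lambda>j \<omega>. real (X j \<omega>)) J"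
      by (rule indep_vars_compose2[OF indep]) simp
    show "AE \<omega> in M. real (X j \<omega>) \<in> {0..1}" if "j \<in> J" for j
      using binary[OF that] by (intro AE_I2) force
    show "real (card J) * p \<equiv> \<Sum>j\<in>J. expectation (\<lambda>\<omega>. real (X j \<omega>))"
      using expectation by simp
  qed (use J in auto)
  have card: "real (card J) > 0" "(\<Sum>j\<in>J. (1 - 0 :: real)\<^sup>2) = card J"
    using J by auto
  have exponent: "-2 * (card J * \<epsilon>)\<^sup>2 / card J = -2 * real (card J) * \<epsilon>\<^sup>2"
    using card by (simp add: power2_eq_square)
  have "{\<omega> \<in> space M. (\<Sum>j\<in>J. real (X j \<omega>)) / card J \<le> p - \<epsilon>}
      = {\<omega> \<in> space M. (\<Sum>j\<in>J. real (X j \<omega>)) \<le> card J * p - card J * \<epsilon>}"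
    unfolding pos_divide_le_eq[OF card(1)] by (simp add: algebra_simps)
  then show "prob {\<omega> \<in> space M. (\<Sum>j\<in>J. real (X j \<omega>)) / card J \<le> p - \<epsilon>} \<le> exp (-2 * real (card J) * \<epsilon>\<^sup>2)"
    using Hoeffding_ineq_le[of "card J * \<epsilon>"] \<epsilon> card exponent by simp
  have "{\<omega> \<in> space M. (\<Sum>j\<in>J. real (X j \<omega>)) / card J \<ge> p + \<epsilon>}
      = {\<omega> \<in> space M. (\<Sum>j\<in>J. real (X j \<omega>)) \<ge> card J * p + card J * \<epsilon>}"
    unfolding pos_le_divide_eq[OF card(1)] by (simp add: algebra_simps)
  then show "prob {\<omega> \<in> space M. (\<Sum>j\<in>J. real (X j \<omega>)) / card J \<ge> p + \<epsilon>} \<le> exp (-2 * real (card J) * \<epsilon>\<^sup>2)"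
    using Hoeffding_ineq_ge[of "card J * \<epsilon>"] \<epsilon> card exponent by simp
qed

lemma prob_none_indep:
  fixes X :: "'i \<Rightarrow> 'a \<Rightarrow> bool"
  assumes indep: "indep_vars (\<lambda>_. count_space UNIV) X J" and J: "finite J"
    and q: "\<And>j. j \<in> J \<Longrightarrow> prob {\<omega> \<in> space M. X j \<omega>} = q"
  shows "prob {\<omega> \<in> space M. \<forall>j\<in>J. \<not> X j \<omega>} = (1 - q) ^ card J"
proof (cases "J = {}")
  case False
  have "prob (\<Inter>j\<in>J. X j -` {False} \<inter> space M) = (\<Prod>j\<in>J. prob (X j -` {False} \<inter> space M))"
    using indep False J by (intro indep_varsD) auto
  moreover have "prob (X j -` {False} \<inter> space M) = 1 - q" if "j \<in> J" for j
  proof -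
    have "random_variable (count_space UNIV) (X j)"
      using indep that by (simp add: indep_vars_def)
    then have "{\<omega> \<in> space M. X j \<omega>} \<in> events"
      by measurable
    moreover have "X j -` {False} \<inter> space M = space M - {\<omega> \<in> space M. X j \<omega>}"
      by auto
    ultimately show ?thesis
      using prob_compl q[OF that] by simp
  qed
  moreover have "(\<Inter>j\<in>J. X j -` {False} \<inter> space M) = {\<omega> \<in> space M. \<forall>j\<in>J. \<not> X j \<omega>}"
    using False by auto
  ultimately show ?thesis
    by simp
qed (simp add: prob_space)

lemma measure_UN_UN_le:
  fixes f :: "'i \<Rightarrow> real"
  assumes T: "finite T" and S: "\<And>t. t \<in> T \<Longrightarrow> finite (S t)"
    and sets: "\<And>t s. t \<in> T \<Longrightarrow> s \<in> S t \<Longrightarrow> A t s \<in> sets M"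
    and bound: "\<And>t s. t \<in> T \<Longrightarrow> s \<in> S t \<Longrightarrow> measure M (A t s) \<le> f t"
  shows "measure M (\<Union>t\<in>T. \<Union>s\<in>S t. A t s) \<le> (\<Sum>t\<in>T. card (S t) * f t)"
proof -
  have "measure M (\<Union>t\<in>T. \<Union>s\<in>S t. A t s) \<le> (\<Sum>t\<in>T. measure M (\<Union>s\<in>S t. A t s))"
    using S sets by (intro finite_measure_subadditive_finite T) auto
  also have "\<dots> \<le> (\<Sum>t\<in>T. \<Sum>s\<in>S t. measure M (A t s))"
    using S sets by (intro sum_mono finite_measure_subadditive_finite) auto
  also have "\<dots> \<le> (\<Sum>t\<in>T. \<Sum>s\<in>S t. f t)"
    using bound by (intro sum_mono) auto
  finally show ?thesis
    by simp
qed

end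

type_synonym prim_idx = "(nat \<times> nat \<times> nat) + ((nat \<times> nat) + (nat \<times> nat))"

definition reward_mean :: "(nat \<Rightarrow> nat \<Rightarrow> nat \<Rightarrow> 'a \<Rightarrow> nat) \<Rightarrow> nat \<Rightarrow> nat \<Rightarrow> nat \<Rightarrow> 'a \<Rightarrow> real" where
  "reward_mean Y i c s \<omega> = (\<Sum>m = 1..s. real (Y i c m \<omega>)) / real s"

lemma emp_mean_eq_reward_mean:
  "pulls I i c t \<omega> \<noteq> 0 \<Longrightarrow> emp_mean Y I i c t \<omega> = reward_mean Y i c (pulls I i c t \<omega>) \<omega>"
  by (simp add: emp_mean_def reward_mean_def)

lemma ucb_eq_reward_mean:
  "pulls I i c (t - 1) \<omega> \<noteq> 0 \<Longrightarrow> ucb \<alpha> Y I i c t \<omega> =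
     ereal (reward_mean Y i c (pulls I i c (t - 1) \<omega>) \<omega> + sqrt (\<alpha> * ln t / pulls I i c (t - 1) \<omega>))"
  by (simp add: ucb_def emp_mean_eq_reward_mean)

lemma ucb_unpulled: "pulls I i c (t - 1) \<omega> = 0 \<Longrightarrow> ucb \<alpha> Y I i c t \<omega> = \<infinity>"
  by (simp add: ucb_def)

lemma recommended_arm_active:
  assumes "algorithm_run M n K \<alpha> \<beta> Shat u1 l1 Y H Z I U L B"
    and "i \<in> {1..n}" "\<omega> \<in> space M" "1 \<le> j"
  shows "recomm n H Z B i j \<omega> \<in> active Shat U L i (j + 1) \<omega>"
proof -
  have "if recomm n H Z B i j \<omega> \<in> active Shat U L i j \<omega>
        then U i (j + 1) \<omega> = U i j \<omega> \<and> L i (j + 1) \<omega> = L i j \<omega>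
        else L i (j + 1) \<omega> = recomm n H Z B i j \<omega>"
    using assms unfolding algorithm_run_def by (smt (verit))
  then show ?thesis
    by (auto simp: active_def split: if_splits)
qed

lemma pulled_arm_maximises_ucb:
  assumes "algorithm_run M n K \<alpha> \<beta> Shat u1 l1 Y H Z I U L B"
    and "i \<in> {1..n}" "\<omega> \<in> space M" "1 \<le> j"
    and "t \<in> {phase_end \<beta> (j - 1) + 1 .. phase_end \<beta> j}" "a \<in> active Shat U L i j \<omega>"
  shows "ucb \<alpha> Y I i a t \<omega> \<le> ucb \<alpha> Y I i (I i t \<omega>) t \<omega>"
  using assms unfolding algorithm_run_def by blast

locale bandit_primitives =
  fixes M :: "'a measure" and n K :: nat and \<mu> :: "nat \<Rightarrow> real"
    and Y :: "nat \<Rightarrow> nat \<Rightarrow> nat \<Rightarrow> 'a \<Rightarrow> nat" and H Z :: "nat \<Rightarrow> nat \<Rightarrow> 'a \<Rightarrow> nat"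
  assumes primitives: "primitives_ok M n K \<mu> Y H Z"
begin

sublocale prob_space M
  using primitives by (simp add: primitives_ok_def)

lemma indep_prim: "indep_vars (\<lambda>_. count_space UNIV) (prim Y H Z) (prim_index n K)"
  using primitives by (simp add: primitives_ok_def)

lemma measurable_prim: "x \<in> prim_index n K \<Longrightarrow> prim Y H Z x \<in> measurable M (count_space UNIV)"
  using indep_prim by (simp add: indep_vars_def)

lemma
  assumes "i \<in> {1..n}"
  shows measurable_reward:
      "c \<in> {1..K} \<Longrightarrow> 1 \<le> m \<Longrightarrow> Y i c m \<in> measurable M (count_space UNIV)"
    and measurable_partner:
      "1 \<le> j \<Longrightarrow> H i j \<in> measurable M (count_space UNIV)"
    and measurable_malicious_arm:
      "1 \<le> j \<Longrightarrow> Z i j \<in> measurable M (count_space UNIV)"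
  using assms measurable_prim[of "Inl (i, c, m)"] measurable_prim[of "Inr (Inl (i, j))"]
    measurable_prim[of "Inr (Inr (i, j))"]
  by (auto simp: prim_index_def prim_def)

lemma reward_mean_measurable:
  assumes "i \<in> {1..n}" "c \<in> {1..K}"
  shows "reward_mean Y i c s \<in> borel_measurable M"
proof -
  have "(\<lambda>\<omega>. real (Y i c m \<omega>)) \<in> borel_measurable M" if "m \<in> {1..s}" for m
    using assms that measurable_reward by (auto intro: measurable_compose[of _ _ "count_space UNIV"])
  then show ?thesis
    unfolding reward_mean_def by (intro borel_measurable_divide borel_measurable_sum) auto
qed

lemma
  assumes i: "i \<in> {1..n}" and c: "c \<in> {1..K}" and s: "1 \<le> s" and \<epsilon>: "\<epsilon> \<ge> 0"
  shows prob_reward_mean_le: "prob {\<omega> \<in> space M. reward_mean Y i c s \<omega> \<le> \<mu> c - \<epsilon>} \<le> exp (-2 * real s * \<epsilon>\<^sup>2)"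
    and prob_reward_mean_ge: "prob {\<omega> \<in> space M. reward_mean Y i c s \<omega> \<ge> \<mu> c + \<epsilon>} \<le> exp (-2 * real s * \<epsilon>\<^sup>2)"
proof -
  define J :: "prim_idx set" where "J = (\<lambda>m. Inl (i, c, m)) ` {1..s}"
  have inj: "inj_on (\<lambda>m. Inl (i, c, m)) {1..s}"
    by (auto simp: inj_on_def)
  then have card: "card J = s"
    using card_image[OF inj] by (simp add: J_def)
  have "(\<Sum>x\<in>J. real (prim Y H Z x \<omega>)) = (\<Sum>m = 1..s. real (Y i c m \<omega>))" for \<omega>
    unfolding J_def sum.reindex[OF inj] by (simp add: prim_def)
  then have sum: "(\<Sum>x\<in>J. real (prim Y H Z x \<omega>)) / s = reward_mean Y i c s \<omega>" for \<omega>
    by (simp add: reward_mean_def)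
  have indep: "indep_vars (\<lambda>_. count_space UNIV) (prim Y H Z) J"
    using i c by (intro indep_vars_subset[OF indep_prim]) (auto simp: J_def prim_index_def)
  have J: "finite J" "J \<noteq> {}"
    using s by (auto simp: J_def)
  have "\<forall>m\<ge>1. (\<forall>\<omega>\<in>space M. Y i c m \<omega> \<in> {0, 1}) \<and> prob {\<omega> \<in> space M. Y i c m \<omega> = 1} = \<mu> c"
    using primitives i c by (simp add: primitives_ok_def)
  then have "x \<in> J \<Longrightarrow> \<omega> \<in> space M \<Longrightarrow> prim Y H Z x \<omega> \<in> {0, 1}"
    and "x \<in> J \<Longrightarrow> prob {\<omega> \<in> space M. prim Y H Z x \<omega> = 1} = \<mu> c" for x \<omega>
    by (auto simp: J_def prim_def) blast+
  note Hoeffding = Hoeffding_Bernoulli_mean_le[OF indep J this \<epsilon>]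
    Hoeffding_Bernoulli_mean_ge[OF indep J this \<epsilon>]
  show "prob {\<omega> \<in> space M. reward_mean Y i c s \<omega> \<le> \<mu> c - \<epsilon>} \<le> exp (-2 * real s * \<epsilon>\<^sup>2)"
    using Hoeffding(1) unfolding card sum by simp
  show "prob {\<omega> \<in> space M. reward_mean Y i c s \<omega> \<ge> \<mu> c + \<epsilon>} \<le> exp (-2 * real s * \<epsilon>\<^sup>2)"
    using Hoeffding(2) unfolding card sum by simp
qed

lemma prob_malicious_recommends:
  assumes i: "i \<in> {1..n}" and j: "1 \<le> j" and a: "a \<in> {1..K}"
  shows "prob {\<omega> \<in> space M. H i j \<omega> = n + 1 \<and> Z i j \<omega> = a} = 1 / (real n * real K)"
proof -
  define x1 :: prim_idx where "x1 = Inr (Inl (i, j))"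
  define x2 :: prim_idx where "x2 = Inr (Inr (i, j))"
  define A where "A x = (if x = x1 then {n + 1} else {a})" for x
  have "prob (\<Inter>x\<in>{x1, x2}. prim Y H Z x -` A x \<inter> space M)
      = (\<Prod>x\<in>{x1, x2}. prob (prim Y H Z x -` A x \<inter> space M))"
    using i j by (intro indep_varsD[OF indep_prim]) (auto simp: x1_def x2_def prim_index_def)
  moreover have "(\<Inter>x\<in>{x1, x2}. prim Y H Z x -` A x \<inter> space M)
      = {\<omega> \<in> space M. H i j \<omega> = n + 1 \<and> Z i j \<omega> = a}"
    by (auto simp: A_def x1_def x2_def prim_def)
  moreover have "prob (prim Y H Z x1 -` A x1 \<inter> space M) = 1 / n"
    using primitives i j by (auto simp: A_def x1_def prim_def primitives_ok_def vimage_def Int_def conj_commute)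
  moreover have "prob (prim Y H Z x2 -` A x2 \<inter> space M) = 1 / K"
    using primitives i j a by (auto simp: A_def x1_def x2_def prim_def primitives_ok_def vimage_def Int_def conj_commute)
  ultimately show ?thesis
    by (simp add: x1_def x2_def)
qed

lemma prob_malicious_never_recommends:
  assumes i: "i \<in> {1..n}" and a: "a \<in> {1..K}" and J: "finite J" "0 \<notin> J"
  shows "prob {\<omega> \<in> space M. \<forall>j\<in>J. \<not> (H i j \<omega> = n + 1 \<and> Z i j \<omega> = a)} = (1 - 1 / (real n * real K)) ^ card J"
proof -
  have J_pos: "1 \<le> j" if "j \<in> J" for j
    using J(2) that by (cases j) auto
  define P :: "nat \<Rightarrow> prim_idx set" where "P j = {Inr (Inl (i, j)), Inr (Inr (i, j))}" for j
  define hit :: "nat \<Rightarrow> (prim_idx \<Rightarrow> nat) \<Rightarrow> bool"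
    where "hit j f = (f (Inr (Inl (i, j))) = n + 1 \<and> f (Inr (Inr (i, j))) = a)" for j f
  have "indep_vars (\<lambda>j. PiM (P j) (\<lambda>_. count_space UNIV)) (\<lambda>j \<omega>. restrict (\<lambda>x. prim Y H Z x \<omega>) (P j)) J"
    using i J_pos by (intro indep_vars_restrict[OF indep_prim])
      (auto simp: P_def prim_index_def disjoint_family_on_def)
  moreover have "hit j \<in> measurable (PiM (P j) (\<lambda>_. count_space UNIV)) (count_space UNIV)" for j
  proof -
    have "Inr (Inl (i, j)) \<in> P j" "Inr (Inr (i, j)) \<in> P j"
      by (auto simp: P_def)
    then show ?thesis
      unfolding hit_def by measurable
  qed
  ultimately have "indep_vars (\<lambda>_. count_space UNIV) (\<lambda>j \<omega>. hit j (restrict (\<lambda>x. prim Y H Z x \<omega>) (P j))) J"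
    by (rule indep_vars_compose2)
  then have "indep_vars (\<lambda>_. count_space UNIV) (\<lambda>j \<omega>. H i j \<omega> = n + 1 \<and> Z i j \<omega> = a) J"
    by (simp add: hit_def P_def prim_def)
  moreover have "prob {\<omega> \<in> space M. H i j \<omega> = n + 1 \<and> Z i j \<omega> = a} = 1 / (real n * real K)" if "j \<in> J" for j
    using J_pos that by (intro prob_malicious_recommends[OF i _ a])
  ultimately show ?thesis
    by (rule prob_none_indep[OF _ J(1)])
qed

end

lemma confidence_gap_ge:
  fixes \<alpha> L L1 L2 \<zeta> \<Delta> lam s Q :: real
  assumes pos: "\<alpha> > 0" "L1 > 0" "L2 > 0" "\<zeta> > 0" "\<Delta> > 0" "Q > 0" "s > 0"
    and L: "L1 \<le> L" and lam: "lam < 1" and s: "s < \<zeta> * \<alpha> * L2 / \<Delta>\<^sup>2"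
    and cond: "sqrt (\<alpha> * L1) * (\<Delta> * (1 - lam) / sqrt (\<zeta> * \<alpha> * L2) - 2 * sqrt 2 / Q) \<ge> \<Delta>"
  shows "\<Delta> \<le> (1 - lam) * sqrt (\<alpha> * L / s) - 2 * sqrt (2 * \<alpha> * L / Q\<^sup>2)"
proof -
  define B where "B = \<Delta> * (1 - lam) / sqrt (\<zeta> * \<alpha> * L2) - 2 * sqrt 2 / Q"
  have "B > 0"
  proof (rule ccontr)
    assume "\<not> B > 0"
    then have "sqrt (\<alpha> * L1) * B \<le> 0"
      using pos by (simp add: mult_nonneg_nonpos)
    then show False
      using cond pos by (simp add: B_def)
  qed
  have "\<alpha> * L * \<Delta>\<^sup>2 / (\<zeta> * \<alpha> * L2) = \<alpha> * L * (\<Delta>\<^sup>2 / (\<zeta> * \<alpha> * L2))"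
    by simp
  also have "\<dots> \<le> \<alpha> * L * (1 / s)"
    using pos L s by (intro mult_left_mono) (auto simp: field_simps)
  finally have "sqrt (\<alpha> * L * \<Delta>\<^sup>2 / (\<zeta> * \<alpha> * L2)) \<le> sqrt (\<alpha> * L / s)"
    by (simp add: real_sqrt_le_mono)
  moreover have "sqrt (\<alpha> * L * \<Delta>\<^sup>2 / (\<zeta> * \<alpha> * L2)) = sqrt (\<alpha> * L) * \<Delta> / sqrt (\<zeta> * \<alpha> * L2)"
    using pos by (simp add: real_sqrt_mult real_sqrt_divide)
  ultimately have "sqrt (\<alpha> * L) * \<Delta> / sqrt (\<zeta> * \<alpha> * L2) \<le> sqrt (\<alpha> * L / s)"
    by linarith
  then have "(1 - lam) * (sqrt (\<alpha> * L) * \<Delta> / sqrt (\<zeta> * \<alpha> * L2)) \<le> (1 - lam) * sqrt (\<alpha> * L / s)"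
    using lam by (intro mult_left_mono) auto
  moreover have "sqrt (2 * \<alpha> * L / Q\<^sup>2) = sqrt (\<alpha> * L) * sqrt 2 / Q"
    using pos by (simp add: real_sqrt_mult real_sqrt_divide)
  moreover have "sqrt (\<alpha> * L) * B
      = (1 - lam) * (sqrt (\<alpha> * L) * \<Delta> / sqrt (\<zeta> * \<alpha> * L2)) - 2 * (sqrt (\<alpha> * L) * sqrt 2 / Q)"
    by (simp add: B_def algebra_simps)
  ultimately have "sqrt (\<alpha> * L) * B \<le> (1 - lam) * sqrt (\<alpha> * L / s) - 2 * sqrt (2 * \<alpha> * L / Q\<^sup>2)"
    by linarith
  moreover have "sqrt (\<alpha> * L1) * B \<le> sqrt (\<alpha> * L) * B"
    using \<open>B > 0\<close> pos L by (intro mult_right_mono) auto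
  ultimately show ?thesis
    using cond by (simp add: B_def)
qed

locale pull_count_analysis = bandit_primitives M n K \<mu> Y H Z
  for M :: "'a measure" and n K :: nat and \<mu> :: "nat \<Rightarrow> real"
    and Y :: "nat \<Rightarrow> nat \<Rightarrow> nat \<Rightarrow> 'a \<Rightarrow> nat" and H Z :: "nat \<Rightarrow> nat \<Rightarrow> 'a \<Rightarrow> nat" +
  fixes \<alpha> \<beta> \<zeta> lam :: real and Shat :: "nat \<Rightarrow> nat set" and u1 l1 :: "nat \<Rightarrow> nat"
    and I U L B :: "nat \<Rightarrow> nat \<Rightarrow> 'a \<Rightarrow> nat" and i k J :: nat
  assumes run: "algorithm_run M n K \<alpha> \<beta> Shat u1 l1 Y H Z I U L B"
    and agent: "i \<in> {1..n}" and arm: "k \<in> {2..K}" and gap: "\<mu> k < \<mu> 1"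
    and alpha: "\<alpha> > 1" and beta: "\<beta> > 1" and J: "real J \<ge> (2 powr \<beta> + 1) powr (1 / \<beta>)"
    and zeta: "\<zeta> > 0" and lambda: "sqrt (1 / \<alpha>) < lam" "lam < 1"
    and separation: "sqrt (\<alpha> * ln (real (phase_end \<beta> J))) *
                 ((\<mu> 1 - \<mu> k) * (1 - lam) / sqrt (\<zeta> * \<alpha> * ln (real (phase_end \<beta> (2 * J))))
                  - 2 * sqrt 2 / real J powr (\<beta> / 2))
               \<ge> \<mu> 1 - \<mu> k"
begin

abbreviation "\<Delta> \<equiv> \<mu> 1 - \<mu> k"
abbreviation "A1 \<equiv> phase_end \<beta> J"
abbreviation "A2 \<equiv> phase_end \<beta> (2 * J)"
abbreviation "P \<equiv> real J powr \<beta>"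
abbreviation "\<tau> \<equiv> \<zeta> * \<alpha> * ln (real A2) / \<Delta>\<^sup>2"
abbreviation "c \<equiv> \<alpha> * lam\<^sup>2"

lemma lam_pos: "lam > 0"
proof -
  have "sqrt (1 / \<alpha>) \<ge> 0"
    using alpha by simp
  then show ?thesis
    using lambda(1) by linarith
qed

lemma c_gt_1: "c > 1"
proof -
  have "1 / \<alpha> < lam\<^sup>2"
    using power_strict_mono[OF lambda(1), of 2] alpha by simp
  then show ?thesis
    using alpha by (simp add: field_simps)
qed

lemma c_le_alpha: "c \<le> \<alpha>"
  using lam_pos lambda(2) alpha by (simp add: power_le_one mult_left_le)

lemma P_ge: "P \<ge> 2 powr \<beta> + 1"
proof -
  have "((2 powr \<beta> + 1) powr (1 / \<beta>)) powr \<beta> \<le> P"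
    using J beta by (intro powr_mono2) auto
  then show ?thesis
    using beta by (simp add: powr_powr)
qed

lemma P_ge_3: "P \<ge> 3"
  using P_ge powr_mono[of 1 \<beta> 2] beta by simp

lemma J_ge_2: "J \<ge> 2"
proof (rule ccontr)
  assume "\<not> J \<ge> 2"
  then have "J = 0 \<or> J = 1"
    by auto
  then have "P \<le> 1"
    by auto
  then show False
    using P_ge_3 by simp
qed

lemma A1_ge_P: "real A1 \<ge> P"
  using J_ge_2 phase_end_ge[of J \<beta>] by simp

lemma A1_le_A2: "A1 \<le> A2"
  using beta by (intro phase_end_mono) auto

lemma ln_A2_le: "ln (real A2) \<le> 2 * \<beta> * ln (real J)"
proof -
  have "real A2 < real (2 * J) powr \<beta> + 1"
    using J_ge_2 by (intro phase_end_le) simp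
  also have "real (2 * J) powr \<beta> = 2 powr \<beta> * P"
    by (simp add: powr_mult)
  also have "2 powr \<beta> * P + 1 \<le> (P - 1) * P + 1"
    using P_ge P_ge_3 by (intro add_right_mono mult_right_mono) auto
  also have "\<dots> \<le> P * P"
    using P_ge_3 by (simp add: algebra_simps)
  finally have "ln (real A2) \<le> ln (P * P)"
    using A1_ge_P A1_le_A2 P_ge_3 by simp
  also have "\<dots> = 2 * \<beta> * ln (real J)"
    using P_ge_3 J_ge_2 by (simp add: ln_mult)
  finally show ?thesis .
qed

lemma tau_nonneg: "\<tau> \<ge> 0"
  using zeta alpha A1_le_A2 A1_ge_P P_ge_3 by simp

lemma tau_le: "\<tau> \<le> 2 * \<zeta> * \<alpha> * \<beta> * ln (real J) / \<Delta>\<^sup>2"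
  using ln_A2_le zeta alpha by (intro divide_right_mono) (auto simp: mult_ac)

lemma arms_valid: "k \<in> {1..K}" "1 \<in> {1..K}"
  using arm by auto

definition few_pulls_event :: "'a set" where
  "few_pulls_event = {\<omega> \<in> space M. real (pulls I i k A2 \<omega>) < \<tau> \<and> real (pulls I i 1 A1 \<omega>) > P / 2 \<and>
     (\<forall>j\<in>{J..2 * J}. \<exists>t\<in>{phase_end \<beta> (j - 1) + 1 .. phase_end \<beta> j}. I i t \<omega> = 1)}"

definition no_malicious_hit :: "'a set" where
  "no_malicious_hit = {\<omega> \<in> space M. \<forall>j\<in>{J..<2 * J}. \<not> (H i j \<omega> = n + 1 \<and> Z i j \<omega> = k)}"

definition low_mean_k :: "nat \<Rightarrow> nat \<Rightarrow> 'a set" where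
  "low_mean_k t s = {\<omega> \<in> space M. reward_mean Y i k s \<omega> \<le> \<mu> k - lam * sqrt (\<alpha> * ln t / s)}"

definition high_mean_1 :: "nat \<Rightarrow> nat \<Rightarrow> 'a set" where
  "high_mean_1 t u = {\<omega> \<in> space M. reward_mean Y i 1 u \<omega> \<ge> \<mu> 1 + sqrt (2 * \<alpha> * ln t / P)}"

definition low_deviations :: "'a set" where
  "low_deviations = (\<Union>t\<in>{A1<..A2}. \<Union>s\<in>{s. 1 \<le> s \<and> real s < \<tau>}. low_mean_k t s)"

definition high_deviations :: "'a set" where
  "high_deviations = (\<Union>t\<in>{A1<..A2}. \<Union>u\<in>{u\<in>{1..<t}. P / 2 < real u}. high_mean_1 t u)"

lemma malicious_hit_ucb_le:
  assumes E: "\<omega> \<in> few_pulls_event" and N: "\<omega> \<notin> no_malicious_hit"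
  obtains t where "t \<in> {A1<..A2}" "ucb \<alpha> Y I i k t \<omega> \<le> ucb \<alpha> Y I i 1 t \<omega>"
proof -
  have \<omega>: "\<omega> \<in> space M"
    using E by (simp add: few_pulls_event_def)
  obtain j where j: "j \<in> {J..<2 * J}" "H i j \<omega> = n + 1" "Z i j \<omega> = k"
    using N \<omega> by (auto simp: no_malicious_hit_def)
  have "1 \<le> j"
    using j J_ge_2 by auto
  have "recomm n H Z B i j \<omega> = k"
    using j by (simp add: recomm_def)
  then have active: "k \<in> active Shat U L i (j + 1) \<omega>"
    using recommended_arm_active[OF run agent \<omega> \<open>1 \<le> j\<close>] by simp
  have "j + 1 \<in> {J..2 * J}"
    using j(1) by simp
  then obtain t where t: "t \<in> {phase_end \<beta> (j + 1 - 1) + 1 .. phase_end \<beta> (j + 1)}" "I i t \<omega> = 1"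
    using E unfolding few_pulls_event_def by blast
  have "ucb \<alpha> Y I i k t \<omega> \<le> ucb \<alpha> Y I i 1 t \<omega>"
    using pulled_arm_maximises_ucb[OF run agent \<omega> _ t(1) active] t(2) by simp
  moreover have "A1 \<le> phase_end \<beta> j" "phase_end \<beta> (j + 1) \<le> A2"
    using j beta by (auto intro: phase_end_mono)
  then have "t \<in> {A1<..A2}"
    using t(1) by auto
  ultimately show ?thesis
    using that by blast
qed

lemma confidence_width_le:
  assumes t: "t \<in> {A1<..A2}" and u: "P / 2 < real u"
  shows "sqrt (\<alpha> * ln t / u) \<le> sqrt (2 * \<alpha> * ln t / P)"
proof -
  have "2 / (2 * real u) \<le> 2 / P"
    using u P_ge_3 J_ge_2 by (intro divide_left_mono mult_pos_pos) auto
  then have "1 / real u \<le> 2 / P"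
    by simp
  moreover have "\<alpha> * ln t \<ge> 0"
    using alpha t by simp
  ultimately have "\<alpha> * ln t * (1 / real u) \<le> \<alpha> * ln t * (2 / P)"
    by (rule mult_left_mono)
  then show ?thesis
    by (simp add: real_sqrt_le_mono mult_ac)
qed

lemma confidence_gap_le:
  assumes t: "t \<in> {A1<..A2}" and s: "1 \<le> s" "real s < \<tau>"
  shows "\<Delta> \<le> (1 - lam) * sqrt (\<alpha> * ln t / s) - 2 * sqrt (2 * \<alpha> * ln t / P)"
proof -
  have "(real J powr (\<beta> / 2))\<^sup>2 = P"
    by (simp add: powr_powr[symmetric] power2_eq_square powr_add[symmetric])
  moreover have "ln (real A1) \<le> ln t" "ln (real A1) > 0" "ln (real A2) > 0"
    using t A1_ge_P P_ge_3 by auto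
  ultimately show ?thesis
    using confidence_gap_ge[of \<alpha> "ln (real A1)" "ln (real A2)" \<zeta> \<Delta> "real J powr (\<beta> / 2)" s "ln t" lam]
      alpha zeta gap J_ge_2 s lambda(2) separation by simp
qed

lemma ucb_le_deviation:
  assumes E: "\<omega> \<in> few_pulls_event" and t: "t \<in> {A1<..A2}"
    and ucb: "ucb \<alpha> Y I i k t \<omega> \<le> ucb \<alpha> Y I i 1 t \<omega>"
  obtains s where "1 \<le> s" "real s < \<tau>"
    "\<omega> \<in> low_mean_k t s \<or> (\<exists>u\<in>{1..<t}. P / 2 < real u \<and> \<omega> \<in> high_mean_1 t u)"
proof -
  have \<omega>: "\<omega> \<in> space M"
    using E by (simp add: few_pulls_event_def)
  define s where "s = pulls I i k (t - 1) \<omega>"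
  define u where "u = pulls I i 1 (t - 1) \<omega>"
  have "real s \<le> real (pulls I i k A2 \<omega>)" "real (pulls I i 1 A1 \<omega>) \<le> real u"
    using t by (auto simp: s_def u_def intro: pulls_mono)
  then have "real s < \<tau>" "P / 2 < real u"
    using E by (auto simp: few_pulls_event_def)
  moreover have "u \<le> t - 1"
    unfolding u_def by (rule pulls_le)
  ultimately have u: "u \<in> {1..<t}"
    using P_ge_3 t by auto
  have "s \<noteq> 0"
  proof
    assume "s = 0"
    then have "ucb \<alpha> Y I i k t \<omega> = \<infinity>"
      by (simp add: s_def ucb_unpulled)
    moreover have "ucb \<alpha> Y I i 1 t \<omega> \<noteq> \<infinity>"
      using u by (simp add: u_def ucb_eq_reward_mean)
    ultimately show False
      using ucb by simp
  qed
  then have "1 \<le> s"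
    by simp
  have ucb_means: "reward_mean Y i k s \<omega> + sqrt (\<alpha> * ln t / s) \<le> reward_mean Y i 1 u \<omega> + sqrt (\<alpha> * ln t / u)"
    using ucb \<open>s \<noteq> 0\<close> u by (simp add: ucb_eq_reward_mean s_def u_def)
  have "reward_mean Y i k s \<omega> \<le> \<mu> k - lam * sqrt (\<alpha> * ln t / s) \<or>
      reward_mean Y i 1 u \<omega> \<ge> \<mu> 1 + sqrt (2 * \<alpha> * ln t / P)"
    using ucb_means confidence_width_le[OF t \<open>P / 2 < real u\<close>]
      confidence_gap_le[OF t \<open>1 \<le> s\<close> \<open>real s < \<tau>\<close>]
    unfolding left_diff_distrib mult_1 by linarith
  then have "\<omega> \<in> low_mean_k t s \<or> \<omega> \<in> high_mean_1 t u"
    using \<omega> by (auto simp: low_mean_k_def high_mean_1_def)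
  then show ?thesis
    using that \<open>1 \<le> s\<close> \<open>real s < \<tau>\<close> u \<open>P / 2 < real u\<close> by blast
qed

(* A pull count s with 1 \<le> s < tau only exists if tau > 1. *)
lemma few_pulls_event_subset:
  "few_pulls_event \<subseteq> no_malicious_hit \<union> (if \<tau> > 1 then low_deviations \<union> high_deviations else {})"
proof
  fix \<omega> assume E: "\<omega> \<in> few_pulls_event"
  show "\<omega> \<in> no_malicious_hit \<union> (if \<tau> > 1 then low_deviations \<union> high_deviations else {})"
  proof (cases "\<omega> \<in> no_malicious_hit")
    case False
    then obtain t where t: "t \<in> {A1<..A2}" "ucb \<alpha> Y I i k t \<omega> \<le> ucb \<alpha> Y I i 1 t \<omega>"
      using malicious_hit_ucb_le[OF E] by blast
    then obtain s where "1 \<le> s" "real s < \<tau>"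
      "\<omega> \<in> low_mean_k t s \<or> (\<exists>u\<in>{1..<t}. P / 2 < real u \<and> \<omega> \<in> high_mean_1 t u)"
      using ucb_le_deviation[OF E] by blast
    then show ?thesis
      using t(1) by (auto simp: low_deviations_def high_deviations_def)
  qed simp
qed

lemma sets_low_mean_k: "low_mean_k t s \<in> events"
  using reward_mean_measurable[OF agent arms_valid(1)] unfolding low_mean_k_def by measurable

lemma sets_high_mean_1: "high_mean_1 t u \<in> events"
  using reward_mean_measurable[OF agent arms_valid(2)] unfolding high_mean_1_def by measurable

lemma sets_no_malicious_hit: "no_malicious_hit \<in> events"
proof -
  have "{\<omega> \<in> space M. H i j \<omega> = n + 1 \<and> Z i j \<omega> = k} \<in> events" if "j \<in> {J..<2 * J}" for j
  proof -
    have [measurable]: "H i j \<in> measurable M (count_space UNIV)" "Z i j \<in> measurable M (count_space UNIV)"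
      using that J_ge_2 measurable_partner[OF agent] measurable_malicious_arm[OF agent] by auto
    show ?thesis
      by measurable
  qed
  then have "space M - (\<Union>j\<in>{J..<2 * J}. {\<omega> \<in> space M. H i j \<omega> = n + 1 \<and> Z i j \<omega> = k}) \<in> events"
    by (intro sets.compl_sets sets.finite_UN) auto
  also have "space M - (\<Union>j\<in>{J..<2 * J}. {\<omega> \<in> space M. H i j \<omega> = n + 1 \<and> Z i j \<omega> = k}) = no_malicious_hit"
    by (auto simp: no_malicious_hit_def)
  finally show ?thesis .
qed

lemma sets_low_deviations: "low_deviations \<in> events"
  unfolding low_deviations_def using finite_positive_below[OF tau_nonneg] sets_low_mean_k
  by (intro sets.finite_UN) auto

lemma sets_high_deviations: "high_deviations \<in> events"
  unfolding high_deviations_def using sets_high_mean_1 by (intro sets.finite_UN) auto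

lemma prob_low_mean_k:
  assumes t: "t \<in> {A1<..A2}" and s: "1 \<le> s"
  shows "prob (low_mean_k t s) \<le> real t powr (-2 * c)"
proof -
  define \<epsilon> where "\<epsilon> = lam * sqrt (\<alpha> * ln t / s)"
  have "ln t \<ge> 0" "real t > 0"
    using t A1_ge_P P_ge_3 by auto
  then have "\<epsilon> \<ge> 0" "\<epsilon>\<^sup>2 = lam\<^sup>2 * (\<alpha> * ln t / s)"
    using lam_pos alpha by (auto simp: \<epsilon>_def power_mult_distrib)
  have "prob (low_mean_k t s) \<le> exp (-2 * real s * \<epsilon>\<^sup>2)"
    using prob_reward_mean_le[OF agent arms_valid(1) s \<open>\<epsilon> \<ge> 0\<close>] by (simp add: low_mean_k_def \<epsilon>_def)
  also have "-2 * real s * \<epsilon>\<^sup>2 = -2 * c * ln t"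
    using \<open>\<epsilon>\<^sup>2 = _\<close> s by (simp add: field_simps)
  also have "exp (-2 * c * ln t) = real t powr (-2 * c)"
    using \<open>real t > 0\<close> by (simp add: powr_def)
  finally show ?thesis .
qed

lemma prob_high_mean_1:
  assumes t: "t \<in> {A1<..A2}" and u: "1 \<le> u" "P / 2 < real u"
  shows "prob (high_mean_1 t u) \<le> real t powr (-2 * \<alpha>)"
proof -
  define \<epsilon> where "\<epsilon> = sqrt (2 * \<alpha> * ln t / P)"
  have "ln t \<ge> 0" "real t > 0"
    using t A1_ge_P P_ge_3 by auto
  then have "\<epsilon> \<ge> 0" "\<epsilon>\<^sup>2 = 2 * \<alpha> * ln t / P"
    using alpha P_ge_3 by (auto simp: \<epsilon>_def)
  have "prob (high_mean_1 t u) \<le> exp (-2 * real u * \<epsilon>\<^sup>2)"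
    using prob_reward_mean_ge[OF agent arms_valid(2) u(1) \<open>\<epsilon> \<ge> 0\<close>] by (simp add: high_mean_1_def \<epsilon>_def)
  also have "\<dots> \<le> exp (-2 * \<alpha> * ln t)"
  proof -
    have "P > 0"
      using P_ge_3 by linarith
    then have "1 \<le> 2 * real u / P"
      using u by (simp add: field_simps)
    then have "1 * (\<alpha> * ln t) \<le> (2 * real u / P) * (\<alpha> * ln t)"
      using alpha \<open>ln t \<ge> 0\<close> by (intro mult_right_mono) auto
    moreover have "(2 * real u / P) * (\<alpha> * ln t) = real u * \<epsilon>\<^sup>2"
      using \<open>\<epsilon>\<^sup>2 = _\<close> by simp
    ultimately show ?thesis
      by simp
  qed
  also have "exp (-2 * \<alpha> * ln t) = real t powr (-2 * \<alpha>)"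
    using \<open>real t > 0\<close> by (simp add: powr_def)
  finally show ?thesis .
qed

lemma prob_no_malicious_hit: "prob no_malicious_hit = (1 - 1 / (real n * real K)) ^ J"
  using prob_malicious_never_recommends[OF agent arms_valid(1), of "{J..<2 * J}"] J_ge_2
  by (simp add: no_malicious_hit_def)

lemma prob_low_deviations: "prob low_deviations \<le> \<tau> * (real A1 powr (1 - 2 * c) / (2 * c - 1))"
proof -
  have "prob low_deviations \<le> (\<Sum>t\<in>{A1<..A2}. real (card {s. 1 \<le> s \<and> real s < \<tau>}) * real t powr (-2 * c))"
    unfolding low_deviations_def using finite_positive_below[OF tau_nonneg] sets_low_mean_k prob_low_mean_k
    by (intro measure_UN_UN_le) auto
  also have "\<dots> \<le> (\<Sum>t\<in>{A1<..A2}. \<tau> * real t powr (-2 * c))"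
    using card_positive_below[OF tau_nonneg] by (intro sum_mono mult_right_mono) auto
  also have "\<dots> = \<tau> * (\<Sum>t\<in>{A1<..A2}. real t powr (-2 * c))"
    by (simp add: sum_distrib_left)
  also have "\<dots> \<le> \<tau> * (real A1 powr (1 - 2 * c) / (2 * c - 1))"
    using sum_powr_neg_le[of "2 * c" A1 A2] c_gt_1 A1_ge_P P_ge_3 tau_nonneg
    by (intro mult_left_mono) auto
  finally show ?thesis .
qed

lemma prob_high_deviations: "prob high_deviations \<le> real A1 powr (2 - 2 * \<alpha>) / (2 * \<alpha> - 2)"
proof -
  have "prob high_deviations \<le> (\<Sum>t\<in>{A1<..A2}. real (card {u\<in>{1..<t}. P / 2 < real u}) * real t powr (-2 * \<alpha>))"
    unfolding high_deviations_def using sets_high_mean_1 prob_high_mean_1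
    by (intro measure_UN_UN_le) auto
  also have "\<dots> \<le> (\<Sum>t\<in>{A1<..A2}. real t * real t powr (-2 * \<alpha>))"
  proof (intro sum_mono mult_right_mono)
    fix t
    have "card {u\<in>{1..<t}. P / 2 < real u} \<le> card {1..<t}"
      by (intro card_mono) auto
    then show "real (card {u\<in>{1..<t}. P / 2 < real u}) \<le> real t"
      by simp
  qed simp
  also have "\<dots> = (\<Sum>t\<in>{A1<..A2}. real t powr (-(2 * \<alpha> - 1)))"
  proof (intro sum.cong refl)
    fix t :: nat
    have "real t powr (-(2 * \<alpha> - 1)) = real t powr 1 * real t powr (-2 * \<alpha>)"
      unfolding powr_add[symmetric] by (simp add: algebra_simps)
    then show "real t * real t powr (-2 * \<alpha>) = real t powr (-(2 * \<alpha> - 1))"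
      by simp
  qed
  also have "\<dots> \<le> real A1 powr (2 - 2 * \<alpha>) / (2 * \<alpha> - 2)"
    using sum_powr_neg_le[of "2 * \<alpha> - 1" A1 A2] alpha A1_ge_P P_ge_3 by (simp add: algebra_simps)
  finally show ?thesis .
qed

abbreviation "deviation_bound \<equiv> 2 * \<zeta> * \<alpha> * \<beta> * ln (real J) * real J powr (2 * \<beta> * (1 - \<alpha> * lam\<^sup>2))
                                / ((\<mu> 1 - \<mu> k)\<^sup>2 * (\<alpha> * lam\<^sup>2 - 1))"

abbreviation "half_bound \<equiv> (2 * \<zeta> * \<alpha> * \<beta> * ln (real J) / \<Delta>\<^sup>2) * (P powr (2 * (1 - c)) / (2 * (c - 1)))"

lemma deviation_bound_eq:
  "deviation_bound = (2 * \<zeta> * \<alpha> * \<beta> * ln (real J) / \<Delta>\<^sup>2) * P powr (2 * (1 - c)) / (c - 1)"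
  by (simp add: powr_powr mult_ac)

lemma half_bound_twice: "half_bound + half_bound = deviation_bound"
proof -
  have "x * (y / (2 * z)) = x * y / z / 2" for x y z :: real
    by simp
  then have "half_bound = deviation_bound / 2"
    unfolding deviation_bound_eq by presburger
  then show ?thesis
    by (simp only: field_sum_of_halves)
qed

lemma deviation_bound_nonneg: "deviation_bound \<ge> 0"
  using zeta alpha beta J_ge_2 c_gt_1 by (simp add: deviation_bound_eq)

lemma tau_deviation_bound_le:
  "\<tau> * (real A1 powr (1 - 2 * c) / (2 * c - 1)) \<le> half_bound"
proof -
  define C where "C = 2 * \<zeta> * \<alpha> * \<beta> * ln (real J) / \<Delta>\<^sup>2"
  define W where "W = P powr (2 * (1 - c))"
  have "W \<ge> 0"
    by (simp add: W_def)
  have "P > 0"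
    using P_ge_3 by linarith
  have "C \<ge> \<tau>"
    using tau_le by (simp add: C_def)
  have "real A1 powr (1 - 2 * c) \<le> P powr (1 - 2 * c)"
    using A1_ge_P \<open>P > 0\<close> c_gt_1 by (intro powr_mono2') auto
  also have "\<dots> = P powr (2 * (1 - c)) / P powr 1"
    unfolding powr_diff[symmetric] by (simp add: algebra_simps)
  also have "\<dots> = W / P"
    using \<open>P > 0\<close> by (simp add: W_def)
  finally have "\<tau> * (real A1 powr (1 - 2 * c) / (2 * c - 1)) \<le> C * (W / P / (2 * c - 1))"
    using \<open>C \<ge> \<tau>\<close> tau_nonneg c_gt_1 by (intro mult_mono divide_right_mono) auto
  also have "W / P / (2 * c - 1) \<le> W / (2 * (c - 1))"
  proof -
    have "1 * (2 * c - 1) \<le> P * (2 * c - 1)"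
      using P_ge_3 c_gt_1 by (intro mult_right_mono) auto
    then have "2 * (c - 1) \<le> P * (2 * c - 1)"
      by (simp add: algebra_simps)
    then have "W / (P * (2 * c - 1)) \<le> W / (2 * (c - 1))"
      using \<open>W \<ge> 0\<close> \<open>P > 0\<close> c_gt_1 by (intro divide_left_mono) auto
    then show ?thesis
      by (simp add: divide_divide_eq_left)
  qed
  finally have "\<tau> * (real A1 powr (1 - 2 * c) / (2 * c - 1)) \<le> C * (W / (2 * (c - 1)))"
    using \<open>C \<ge> \<tau>\<close> tau_nonneg by (simp add: mult_left_mono)
  then show ?thesis
    unfolding C_def W_def .
qed

lemma exploration_deviation_bound_le:
  assumes "\<tau> > 1"
  shows "real A1 powr (2 - 2 * \<alpha>) / (2 * \<alpha> - 2) \<le> half_bound"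
proof -
  define C where "C = 2 * \<zeta> * \<alpha> * \<beta> * ln (real J) / \<Delta>\<^sup>2"
  define W where "W = P powr (2 * (1 - c))"
  have "W \<ge> 0"
    by (simp add: W_def)
  have "P > 0"
    using P_ge_3 by linarith
  have "real A1 powr (2 - 2 * \<alpha>) \<le> P powr (2 - 2 * \<alpha>)"
    using A1_ge_P \<open>P > 0\<close> alpha by (intro powr_mono2') auto
  also have "\<dots> \<le> W"
    unfolding W_def using P_ge_3 c_le_alpha by (intro powr_mono) auto
  finally have "real A1 powr (2 - 2 * \<alpha>) / (2 * \<alpha> - 2) \<le> W / (2 * (c - 1))"
    using \<open>W \<ge> 0\<close> c_le_alpha c_gt_1 by (intro frac_le) auto
  also have "\<dots> \<le> C * (W / (2 * (c - 1)))"
  proof -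
    have nonneg: "0 \<le> W / (2 * (c - 1))"
      using \<open>W \<ge> 0\<close> c_gt_1 by simp
    show ?thesis
      using mult_right_mono[OF _ nonneg, of 1 C] tau_le assms by (simp add: C_def)
  qed
  finally show ?thesis
    unfolding C_def W_def .
qed

theorem prob_few_pulls_event_le:
  "prob few_pulls_event \<le> deviation_bound + (1 - 1 / (real n * real K)) ^ J"
proof (cases "\<tau> > 1")
  case True
  then have "prob few_pulls_event \<le> prob (no_malicious_hit \<union> low_deviations \<union> high_deviations)"
    using few_pulls_event_subset sets_no_malicious_hit sets_low_deviations sets_high_deviations
    by (intro finite_measure_mono) auto
  also have "\<dots> \<le> prob (no_malicious_hit \<union> low_deviations) + prob high_deviations"
    using sets_no_malicious_hit sets_low_deviations sets_high_deviations
    by (intro measure_subadditive) auto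
  also have "\<dots> \<le> prob no_malicious_hit + prob low_deviations + prob high_deviations"
    using measure_subadditive[OF sets_no_malicious_hit sets_low_deviations] by simp
  also have "\<dots> \<le> deviation_bound + (1 - 1 / (real n * real K)) ^ J"
    using prob_no_malicious_hit prob_low_deviations prob_high_deviations half_bound_twice
      tau_deviation_bound_le exploration_deviation_bound_le[OF True]
    by linarith
  finally show ?thesis .
next
  case False
  then have "prob few_pulls_event \<le> prob no_malicious_hit"
    using few_pulls_event_subset sets_no_malicious_hit by (intro finite_measure_mono) auto
  then show ?thesis
    using prob_no_malicious_hit deviation_bound_nonneg by simp
qed

end

theorem lemma5:
  fixes M :: "'a measure" and n K Ssz :: nat and \<mu> :: "nat \<Rightarrow> real"
    and \<alpha> \<beta> \<zeta> lam :: real and Shat :: "nat \<Rightarrow> nat set" and u1 l1 :: "nat \<Rightarrow> nat"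
    and Y :: "nat \<Rightarrow> nat \<Rightarrow> nat \<Rightarrow> 'a \<Rightarrow> nat"
    and H Z I U L B :: "nat \<Rightarrow> nat \<Rightarrow> 'a \<Rightarrow> nat"
    and k jstar i :: nat
  assumes n_pos: "1 \<le> n"
    and mu_range: "\<forall>a\<in>{1..K}. 0 < \<mu> a \<and> \<mu> a < 1"
    and mu_order: "\<mu> 1 > \<mu> 2" "\<forall>a\<in>{2..<K}. \<mu> (a + 1) \<le> \<mu> a"
    and sticky: "\<forall>h\<in>{1..n}. Shat h \<subseteq> {1..K} \<and> card (Shat h) = Ssz \<and>
                   u1 h \<in> {1..K} - Shat h \<and> l1 h \<in> {1..K} - Shat h \<and> u1 h \<noteq> l1 h"
    and prims: "primitives_ok M n K \<mu> Y H Z"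
    and run: "algorithm_run M n K \<alpha> \<beta> Shat u1 l1 Y H Z I U L B"
    and alpha: "\<alpha> > 1" and beta: "\<beta> > 1"
    and k: "k \<in> {2..K}"
    and jstar: "real jstar \<ge> (2 powr \<beta> + 1) powr (1 / \<beta>)"
    and zeta: "\<zeta> > 0"
    and lambda: "sqrt (1 / \<alpha>) < lam" "lam < 1"
    and cond: "sqrt (\<alpha> * ln (real (phase_end \<beta> jstar))) *
                 ((\<mu> 1 - \<mu> k) * (1 - lam) / sqrt (\<zeta> * \<alpha> * ln (real (phase_end \<beta> (2 * jstar))))
                  - 2 * sqrt 2 / real jstar powr (\<beta> / 2))
               \<ge> \<mu> 1 - \<mu> k"
    and i: "i \<in> {1..n}"
  shows "measure M {\<omega> \<in> space M.
            real (pulls I i k (phase_end \<beta> (2 * jstar)) \<omega>)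
              < \<zeta> * \<alpha> * ln (real (phase_end \<beta> (2 * jstar))) / (\<mu> 1 - \<mu> k)\<^sup>2 \<and>
            real (pulls I i 1 (phase_end \<beta> jstar) \<omega>) > real jstar powr \<beta> / 2 \<and>
            (\<forall>j\<in>{jstar..2 * jstar}. \<exists>t\<in>{phase_end \<beta> (j - 1) + 1 .. phase_end \<beta> j}. I i t \<omega> = 1)}
         \<le> 2 * \<zeta> * \<alpha> * \<beta> * ln (real jstar) * real jstar powr (2 * \<beta> * (1 - \<alpha> * lam\<^sup>2))
              / ((\<mu> 1 - \<mu> k)\<^sup>2 * (\<alpha> * lam\<^sup>2 - 1))
           + (1 - 1 / (real n * real K)) ^ jstar"
proof -
  have "\<mu> k < \<mu> 1"
    using decreasing_from_le[OF mu_order(2)] mu_order(1) k by fastforce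
  then interpret pull_count_analysis M n K \<mu> Y H Z \<alpha> \<beta> \<zeta> lam Shat u1 l1 I U L B i k jstar
    using prims run i k alpha beta jstar zeta lambda cond by unfold_locales
  show ?thesis
    using prob_few_pulls_event_le by (simp add: few_pulls_event_def)
qed

end
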